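(* Let $G$ be a finite group and let $\Omega$ be a connected component of $\mathcal{P}^*(G)$ which is a clique (its vertices are pairwise adjacent). Then there exist a prime $p\in\pi(G)$ and a cyclic $p$-subgroup $H$ of $G$ such that $\mathcal{P}^*(H)=\Omega$.
   Context: For a finite group $G$, the power graph $\mathcal{P}(G)$ is the simple undirected graph with vertex set $G$, two distinct vertices $x,y$ being adjacent iff $\langle x\rangle\subseteq\langle y\rangle$ or $\langle y\rangle\subseteq\langle x\rangle$. $\mathcal{P}^*(G)$ denotes the graph obtained from $\mathcal{P}(G)$ by deleting the vertex $1$ (for a subgroup $H$, $\mathcal{P}^*(H)$ is the corresponding graph on $H\setminus\{1\}$, a subgraph of $\mathcal{P}^*(G)$). $\pi(G)$ is the set of prime divisors of $|G|$. *)

theory Defs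
  imports "HOL-Algebra.Algebra"
begin

definition pg_adj :: "('a, 'b) monoid_scheme \<Rightarrow> 'a \<Rightarrow> 'a \<Rightarrow> bool" where
  "pg_adj G x y \<longleftrightarrow> x \<noteq> y \<and>
     (generate G {x} \<subseteq> generate G {y} \<or> generate G {y} \<subseteq> generate G {x})"

definition pstar_vertices :: "('a, 'b) monoid_scheme \<Rightarrow> 'a set" where
  "pstar_vertices G = carrier G - {\<one>\<^bsub>G\<^esub>}"

definition pstar_adj :: "('a, 'b) monoid_scheme \<Rightarrow> 'a \<Rightarrow> 'a \<Rightarrow> bool" where
  "pstar_adj G x y \<longleftrightarrow> x \<in> pstar_vertices G \<and> y \<in> pstar_vertices G \<and> pg_adj G x y"

definition pstar_component :: "('a, 'b) monoid_scheme \<Rightarrow> 'a set \<Rightarrow> bool" where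
  "pstar_component G \<Omega> \<longleftrightarrow>
     (\<exists>x \<in> pstar_vertices G. \<Omega> = {y \<in> pstar_vertices G. (pstar_adj G)\<^sup>*\<^sup>* x y})"

definition pstar_clique :: "('a, 'b) monoid_scheme \<Rightarrow> 'a set \<Rightarrow> bool" where
  "pstar_clique G \<Omega> \<longleftrightarrow> (\<forall>x \<in> \<Omega>. \<forall>y \<in> \<Omega>. x \<noteq> y \<longrightarrow> pstar_adj G x y)"

end

theory Submission
  imports Defs "HOL-Number_Theory.Prime_Powers"
begin

(*
  A component \<Omega> of P*(G) is closed under adjacency. If it is a clique, choose g in \<Omega> with
  <g> maximal among the cyclic subgroups <y>, y in \<Omega>. Adjacent vertices generate comparable
  subgroups, so every <y> lies in <g>; conversely every non-identity element of <g> is adjacent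
  to g. Hence \<Omega> = <g> - {1}. If two distinct primes divided ord g, then <g> would contain
  elements of these two prime orders, and these generate incomparable subgroups; so the order
  of <g> is a prime power.
*)

lemma primepow_if_unique_prime_divisor:
  fixes n :: nat
  assumes "n > 1"
    and "\<And>p q. Factorial_Ring.prime p \<Longrightarrow> Factorial_Ring.prime q \<Longrightarrow> p dvd n \<Longrightarrow> q dvd n \<Longrightarrow> p = q"
  shows "primepow n"
proof -
  obtain p where p: "Factorial_Ring.prime p" "p dvd n"
    using prime_factor_nat[of n] assms(1) by auto
  have "prime_factors n = {p}"
    using assms p by (auto simp: prime_factors_dvd)
  then have "n = p ^ multiplicity p n"
    using prime_factorization_nat[of n] assms(1) by simp
  moreover have "multiplicity p n > 0"
    using p assms(1) by (simp add: prime_multiplicity_gt_zero_iff)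
  ultimately show ?thesis
    using p(1) unfolding primepow_def by blast
qed

lemma pstar_component_subset:
  "pstar_component G \<Omega> \<Longrightarrow> \<Omega> \<subseteq> carrier G - {\<one>\<^bsub>G\<^esub>}"
  by (auto simp: pstar_component_def pstar_vertices_def)

lemma pstar_component_nonempty:
  "pstar_component G \<Omega> \<Longrightarrow> \<Omega> \<noteq> {}"
  by (auto simp: pstar_component_def)

lemma pstar_component_adj_closed:
  assumes "pstar_component G \<Omega>" "y \<in> \<Omega>" "pstar_adj G y z"
  shows "z \<in> \<Omega>"
proof -
  obtain x where "\<Omega> = {y \<in> pstar_vertices G. (pstar_adj G)\<^sup>*\<^sup>* x y}"
    using assms(1) unfolding pstar_component_def by blast
  then show ?thesis
    using assms(2,3) by (auto simp: pstar_adj_def intro: rtranclp.rtrancl_into_rtrancl)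
qed

lemma pstar_clique_has_greatest_generate:
  assumes "finite \<Omega>" "\<Omega> \<noteq> {}" "pstar_clique G \<Omega>"
  obtains g where "g \<in> \<Omega>" "\<And>y. y \<in> \<Omega> \<Longrightarrow> generate G {y} \<subseteq> generate G {g}"
proof -
  obtain g where g: "g \<in> \<Omega>"
    and maximal: "\<And>y. y \<in> \<Omega> \<Longrightarrow> generate G {g} \<subseteq> generate G {y} \<Longrightarrow>
                        generate G {g} = generate G {y}"
    using finite_has_maximal[of "(\<lambda>y. generate G {y}) ` \<Omega>"] assms(1,2) by auto
  have "generate G {y} \<subseteq> generate G {g}" if "y \<in> \<Omega>" for y
  proof (cases "y = g")
    case False
    then have "pg_adj G y g"
      using assms(3) that g by (simp add: pstar_clique_def pstar_adj_def)
    then show ?thesis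
      using maximal[OF that] by (auto simp: pg_adj_def)
  qed simp
  with g that show thesis by blast
qed

context group begin

lemma ord_dvd_ord_if_generate_subset:
  assumes "a \<in> carrier G" "b \<in> carrier G" "generate G {a} \<subseteq> generate G {b}"
  shows "ord a dvd ord b"
proof -
  have "a \<in> generate G {b}" using assms generate.incl[of a "{a}" G] by blast
  then obtain k :: int where k: "a = b [^] k" using generate_pow[OF assms(2)] by blast
  have "a [^] ord b = (b [^] ord b) [^] k"
    using assms(2) by (simp add: k int_pow_pow mult.commute flip: int_pow_int)
  then show ?thesis using assms by (simp add: pow_eq_id)
qed

lemma ex_ord_prime_in_generate:
  assumes "g \<in> carrier G" "ord g \<noteq> 0" "Factorial_Ring.prime q" "q dvd ord g"
  shows "\<exists>a \<in> generate G {g}. ord a = q"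
proof -
  obtain m where m: "ord g = q * m" using assms(4) by blast
  then have "ord (g [^] m) = q"
    using assms ord_pow[of g m] by (simp add: prime_gt_0_nat)
  moreover have "g [^] m \<in> generate G {g}"
    using generate_pow_nat[OF assms(1,2)] by blast
  ultimately show ?thesis by blast
qed

lemma pg_adj_subgroup_iff:
  assumes "subgroup H G" "x \<in> H" "y \<in> H"
  shows "pg_adj (G\<lparr>carrier := H\<rparr>) x y \<longleftrightarrow> pg_adj G x y"
  using assms by (simp add: pg_adj_def generate_consistent)

lemma primepow_ord_if_clique:
  assumes g: "g \<in> carrier G" "g \<noteq> \<one>" "ord g \<noteq> 0"
    and clique: "pstar_clique G (generate G {g} - {\<one>})"
  shows "primepow (ord g)"
proof (rule primepow_if_unique_prime_divisor)
  show "ord g > 1"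
    using g ord_eq_1 by (metis less_one nat_neq_iff)
  fix p q :: nat
  assume pq: "Factorial_Ring.prime p" "Factorial_Ring.prime q" "p dvd ord g" "q dvd ord g"
  obtain a b where a: "a \<in> generate G {g}" "ord a = p"
    and b: "b \<in> generate G {g}" "ord b = q"
    using ex_ord_prime_in_generate g pq by metis
  have carrier_ab: "a \<in> carrier G" "b \<in> carrier G"
    using a(1) b(1) generate_incl g(1) by blast+
  show "p = q"
  proof (cases "a = b")
    case False
    have "a \<noteq> \<one>" "b \<noteq> \<one>"
      using a(2) b(2) pq(1,2) by auto
    then have "pg_adj G a b"
      using clique a(1) b(1) False by (simp add: pstar_clique_def pstar_adj_def)
    then have "p dvd q \<or> q dvd p"
      using ord_dvd_ord_if_generate_subset carrier_ab a(2) b(2) by (auto simp: pg_adj_def)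
    then show ?thesis
      using pq(1,2) primes_dvd_imp_eq by blast
  qed (use a b in simp)
qed

lemma clique_component_eq_generate:
  assumes "finite (carrier G)" "pstar_component G \<Omega>" "pstar_clique G \<Omega>"
  obtains g where "g \<in> \<Omega>" "\<Omega> = generate G {g} - {\<one>}"
proof -
  have \<Omega>_sub: "\<Omega> \<subseteq> carrier G - {\<one>}"
    using pstar_component_subset[OF assms(2)] .
  then have "finite \<Omega>"
    using assms(1) finite_subset by blast
  then obtain g where g: "g \<in> \<Omega>"
    and greatest: "\<And>y. y \<in> \<Omega> \<Longrightarrow> generate G {y} \<subseteq> generate G {g}"
    using pstar_clique_has_greatest_generate pstar_component_nonempty assms(2,3) by metis
  have g_carrier: "g \<in> carrier G" "g \<noteq> \<one>"
    using g \<Omega>_sub by auto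
  have "\<Omega> \<subseteq> generate G {g} - {\<one>}"
    using \<Omega>_sub greatest generate.incl[of _ "{_}" G] by blast
  moreover have "generate G {g} - {\<one>} \<subseteq> \<Omega>"
  proof
    fix y assume y: "y \<in> generate G {g} - {\<one>}"
    show "y \<in> \<Omega>"
    proof (cases "y = g")
      case False
      have "y \<in> carrier G"
        using y generate_incl g_carrier(1) by blast
      moreover have "generate G {y} \<subseteq> generate G {g}"
        using y g_carrier(1) by (simp add: generate_subgroup_incl generate_is_subgroup)
      ultimately have "pstar_adj G g y"
        using False y g_carrier by (auto simp: pstar_adj_def pg_adj_def pstar_vertices_def)
      then show ?thesis
        using pstar_component_adj_closed[OF assms(2) g] by blast
    qed (use g in simp)
  qed
  ultimately show thesis
    using g that by blast
qed

end

theorem lemma3p3: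
  fixes G :: "('a, 'b) monoid_scheme" and \<Omega> :: "'a set"
  assumes "group G" and "finite (carrier G)"
    and "pstar_component G \<Omega>" and "pstar_clique G \<Omega>"
  shows "\<exists>(p::nat) H. Factorial_Ring.prime p \<and> p dvd order G \<and> subgroup H G
           \<and> (\<exists>g \<in> H. H = generate G {g}) \<and> (\<exists>k::nat. card H = p ^ k)
           \<and> H - {\<one>\<^bsub>G\<^esub>} = \<Omega>
           \<and> (\<forall>x \<in> H - {\<one>\<^bsub>G\<^esub>}. \<forall>y \<in> H - {\<one>\<^bsub>G\<^esub>}.
                 pg_adj (G\<lparr>carrier := H\<rparr>) x y \<longleftrightarrow> pstar_adj G x y)"
proof -
  interpret group G by fact
  obtain g where g: "g \<in> \<Omega>" and \<Omega>: "\<Omega> = generate G {g} - {\<one>\<^bsub>G\<^esub>}"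
    using clique_component_eq_generate assms(2-4) by blast
  have g_carrier: "g \<in> carrier G" "g \<noteq> \<one>\<^bsub>G\<^esub>"
    using g pstar_component_subset[OF assms(3)] by auto
  define H where "H = generate G {g}"
  have H: "subgroup H G"
    unfolding H_def using g_carrier(1) by (simp add: generate_is_subgroup)
  have card_H: "card H = ord g"
    unfolding H_def using generate_pow_card[OF g_carrier(1)] by simp
  have "ord g \<noteq> 0"
    using ord_ge_1[OF assms(2) g_carrier(1)] by simp
  then have "primepow (card H)"
    using primepow_ord_if_clique g_carrier assms(4) \<Omega> card_H H_def by simp
  then obtain p k where p: "Factorial_Ring.prime p" "k > 0" "card H = p ^ k"
    unfolding primepow_def by blast
  have "p dvd order G"
    using p card_H ord_dvd_group_order[OF g_carrier(1)] by (metis dvd_power dvd_trans)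
  moreover have "\<forall>x \<in> H - {\<one>\<^bsub>G\<^esub>}. \<forall>y \<in> H - {\<one>\<^bsub>G\<^esub>}.
                   pg_adj (G\<lparr>carrier := H\<rparr>) x y \<longleftrightarrow> pstar_adj G x y"
    using pg_adj_subgroup_iff[OF H] subgroup.subset[OF H]
    by (auto simp: pstar_adj_def pstar_vertices_def)
  moreover have "g \<in> H"
    unfolding H_def by (rule generate.incl) simp
  ultimately show ?thesis
    using p H \<Omega> H_def by blast
qed

end
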